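(* Let $\{\tilde\alpha,\tilde\beta\}$ be a dual timelike - spacelike Mannheim pair in $ID_1^3$. Then the dual curvature $P$ and dual torsion $Q$ of $\tilde\beta$ and the dual torsion $\tau$ of $\tilde\alpha$ satisfy $$P^2-Q^2=\tau^2\left(\frac{ds}{ds^*}\right)^2.$$
   Context: Dual numbers: $ID=\{a+\varepsilon a^*: a,a^*\in\mathbb R\}$ with $\varepsilon^2=0$. $ID_1^3$ is $ID^3$ with dual Lorentzian inner product $\langle \vec A,\vec B\rangle=\langle\vec a,\vec b\rangle+\varepsilon(\langle\vec a,\vec b^*\rangle+\langle\vec a^*,\vec b\rangle)$, $\langle\vec a,\vec b\rangle=-a_1b_1+a_2b_2+a_3b_3$. $\tilde\alpha$ is a dual timelike curve with dual arc length $s$, Frenet frame $\{T,N,B\}$ ($T$ timelike, $N,B$ spacelike unit), $T'=\kappa N$, $N'=\kappa T+\tau B$, $B'=-\tau N$. $\tilde\beta$ is a dual spacelike curve with dual timelike binormal, arc length $s^*$, frame $\{V_1,V_2,V_3\}$ ($V_3$ timelike), $V_1'=PV_2$, $V_2'=-PV_1+QV_3$, $V_3'=QV_2$. A dual timelike - spacelike Mannheim pair means that under a correspondence $s\mapsto s^*$ the dual binormal line of $\tilde\alpha$ coincides with the dual principal normal line of $\tilde\beta$ at corresponding points, i.e. $\tilde\beta(s^* )=\tilde\alpha(s)+\lambda B(s)$. *)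

theory Defs
  imports Complex_Main
begin

datatype dual = Dual (Re_d: real) (Eps_d: real)

instantiation dual :: comm_ring_1
begin
definition "0 = Dual 0 0"
definition "1 = Dual 1 0"
definition "x + y = Dual (Re_d x + Re_d y) (Eps_d x + Eps_d y)"
definition "x - y = Dual (Re_d x - Re_d y) (Eps_d x - Eps_d y)"
definition "- x = Dual (- Re_d x) (- Eps_d x)"
definition "x * y = Dual (Re_d x * Re_d y) (Re_d x * Eps_d y + Eps_d x * Re_d y)"
instance
  by standard (auto simp: zero_dual_def one_dual_def plus_dual_def minus_dual_def
      uminus_dual_def times_dual_def algebra_simps dual.expand)
end

text \<open>Inverse (meaningful for duals with non-zero real part):
  (a + eps b)^-1 = 1/a - eps b/a^2.\<close>
instantiation dual :: inverse
begin
definition "inverse x = Dual (inverse (Re_d x)) (- Eps_d x / (Re_d x)\<^sup>2)"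
definition "divide x y = x * inverse (y::dual)"
instance ..
end

datatype dvec = DVec (c1: dual) (c2: dual) (c3: dual)

definition vadd :: "dvec \<Rightarrow> dvec \<Rightarrow> dvec" where
  "vadd u v = DVec (c1 u + c1 v) (c2 u + c2 v) (c3 u + c3 v)"

definition smult :: "dual \<Rightarrow> dvec \<Rightarrow> dvec" where
  "smult a v = DVec (a * c1 v) (a * c2 v) (a * c3 v)"

text \<open><A,B> = <a,b> + eps(<a,b*> + <a*,b>) with <a,b> = -a1 b1 + a2 b2 + a3 b3;
  this equals -A1 B1 + A2 B2 + A3 B3 computed in dual arithmetic.\<close>
definition linner :: "dvec \<Rightarrow> dvec \<Rightarrow> dual" where
  "linner u v = - (c1 u * c1 v) + c2 u * c2 v + c3 u * c3 v"

definition dual_has_deriv :: "(real \<Rightarrow> dual) \<Rightarrow> dual \<Rightarrow> real \<Rightarrow> bool" where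
  "dual_has_deriv f d t \<longleftrightarrow>
     ((\<lambda>x. Re_d (f x)) has_real_derivative Re_d d) (at t) \<and>
     ((\<lambda>x. Eps_d (f x)) has_real_derivative Eps_d d) (at t)"

definition dvec_has_deriv :: "(real \<Rightarrow> dvec) \<Rightarrow> dvec \<Rightarrow> real \<Rightarrow> bool" where
  "dvec_has_deriv F D t \<longleftrightarrow>
     dual_has_deriv (\<lambda>x. c1 (F x)) (c1 D) t \<and>
     dual_has_deriv (\<lambda>x. c2 (F x)) (c2 D) t \<and>
     dual_has_deriv (\<lambda>x. c3 (F x)) (c3 D) t"

text \<open>Curves are parametrised by a common real parameter t on I; sigma t = ds/dt is the
  derivative of the dual arc length s with respect to t (positive real part), so that the
  derivative with respect to s of a function F is F'(t)/sigma(t).  The Frenet equations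
  X' = ... with respect to s are therefore written as d/dt X = sigma * (...).\<close>

definition timelike_frenet ::
  "real set \<Rightarrow> (real \<Rightarrow> dvec) \<Rightarrow> (real \<Rightarrow> dual) \<Rightarrow> (real \<Rightarrow> dvec) \<Rightarrow> (real \<Rightarrow> dvec)
   \<Rightarrow> (real \<Rightarrow> dvec) \<Rightarrow> (real \<Rightarrow> dual) \<Rightarrow> (real \<Rightarrow> dual) \<Rightarrow> bool" where
  "timelike_frenet I \<alpha> \<sigma> T N B \<kappa> \<tau> \<longleftrightarrow>
    (\<forall>t\<in>I. Re_d (\<sigma> t) > 0 \<and>
       dvec_has_deriv \<alpha> (smult (\<sigma> t) (T t)) t \<and>
       linner (T t) (T t) = -1 \<and> linner (N t) (N t) = 1 \<and> linner (B t) (B t) = 1 \<and>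
       linner (T t) (N t) = 0 \<and> linner (T t) (B t) = 0 \<and> linner (N t) (B t) = 0 \<and>
       dvec_has_deriv T (smult (\<sigma> t * \<kappa> t) (N t)) t \<and>
       dvec_has_deriv N (smult (\<sigma> t) (vadd (smult (\<kappa> t) (T t)) (smult (\<tau> t) (B t)))) t \<and>
       dvec_has_deriv B (smult (\<sigma> t * - \<tau> t) (N t)) t)"

definition spacelike_frenet ::
  "real set \<Rightarrow> (real \<Rightarrow> dvec) \<Rightarrow> (real \<Rightarrow> dual) \<Rightarrow> (real \<Rightarrow> dvec) \<Rightarrow> (real \<Rightarrow> dvec)
   \<Rightarrow> (real \<Rightarrow> dvec) \<Rightarrow> (real \<Rightarrow> dual) \<Rightarrow> (real \<Rightarrow> dual) \<Rightarrow> bool" where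
  "spacelike_frenet I \<beta> \<sigma> V1 V2 V3 P Q \<longleftrightarrow>
    (\<forall>t\<in>I. Re_d (\<sigma> t) > 0 \<and>
       dvec_has_deriv \<beta> (smult (\<sigma> t) (V1 t)) t \<and>
       linner (V1 t) (V1 t) = 1 \<and> linner (V2 t) (V2 t) = 1 \<and> linner (V3 t) (V3 t) = -1 \<and>
       linner (V1 t) (V2 t) = 0 \<and> linner (V1 t) (V3 t) = 0 \<and> linner (V2 t) (V3 t) = 0 \<and>
       dvec_has_deriv V1 (smult (\<sigma> t * P t) (V2 t)) t \<and>
       dvec_has_deriv V2 (smult (\<sigma> t) (vadd (smult (- P t) (V1 t)) (smult (Q t) (V3 t)))) t \<and>
       dvec_has_deriv V3 (smult (\<sigma> t * Q t) (V2 t)) t)"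

definition dline :: "dvec \<Rightarrow> dvec \<Rightarrow> dvec set" where
  "dline p d = {vadd p (smult x d) | x. True}"

text \<open>Dual timelike-spacelike Mannheim pair: at corresponding points (same parameter t)
  the binormal line of alpha equals the principal normal line of beta.\<close>
definition mannheim_pair ::
  "real set \<Rightarrow> (real \<Rightarrow> dvec) \<Rightarrow> (real \<Rightarrow> dvec) \<Rightarrow> (real \<Rightarrow> dvec) \<Rightarrow> (real \<Rightarrow> dvec) \<Rightarrow> bool" where
  "mannheim_pair I \<alpha> B \<beta> V2 \<longleftrightarrow> (\<forall>t\<in>I. dline (\<alpha> t) (B t) = dline (\<beta> t) (V2 t))"

end

theory Submission
  imports Defs
begin

text \<open>By the Mannheim condition the principal normal of the second curve is a multiple
  \<open>V\<^sub>2 = \<mu> B\<close> of the binormal of the first. Both are unit spacelike, so \<open>\<mu>\<^sup>2 = 1\<close>; a dual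
  number whose square is constant and whose real part is non-zero has derivative zero,
  hence \<open>V\<^sub>2' = \<mu> B'\<close>. Inserting the Frenet formulas, \<open>\<sigma>\<^sup>* (-P V\<^sub>1 + Q V\<^sub>3) = -\<mu> \<sigma> \<tau> N\<close>,
  and comparing Lorentzian squares gives \<open>\<sigma>\<^sup>*\<^sup>2 (P\<^sup>2 - Q\<^sup>2) = \<sigma>\<^sup>2 \<tau>\<^sup>2\<close>.\<close>

lemma dual_parts [simp]:
  "Re_d (x + y) = Re_d x + Re_d y" "Eps_d (x + y) = Eps_d x + Eps_d y"
  "Re_d (x - y) = Re_d x - Re_d y" "Eps_d (x - y) = Eps_d x - Eps_d y"
  "Re_d (- x) = - Re_d x" "Eps_d (- x) = - Eps_d x"
  "Re_d (x * y) = Re_d x * Re_d y" "Eps_d (x * y) = Re_d x * Eps_d y + Eps_d x * Re_d y"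
  "Re_d 0 = 0" "Eps_d 0 = 0" "Re_d 1 = 1" "Eps_d 1 = 0"
  by (simp_all add: plus_dual_def minus_dual_def uminus_dual_def times_dual_def
      zero_dual_def one_dual_def)

lemma dual_mult_eq_0_imp:
  fixes m d :: dual
  assumes "Re_d m \<noteq> 0" "m * d = 0"
  shows "d = 0"
proof -
  have "Re_d d = 0" using arg_cong[OF assms(2), of Re_d] assms(1) by simp
  moreover have "Eps_d d = 0" using arg_cong[OF assms(2), of Eps_d] assms(1) calculation by simp
  ultimately show ?thesis by (simp add: dual.expand)
qed

lemma dual_square_eq_1_imp_Re_nonzero: "(m::dual) * m = 1 \<Longrightarrow> Re_d m \<noteq> 0"
  by (metis dual_parts(7,11) mult_zero_left zero_neq_one)

lemma inverse_mult_dual: "Re_d x \<noteq> 0 \<Longrightarrow> inverse x * x = (1::dual)"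
  by (simp add: inverse_dual_def power2_eq_square divide_inverse dual.expand)

lemma dual_eq_times_square_div:
  fixes s a x y :: dual
  assumes "Re_d s \<noteq> 0" "s\<^sup>2 * x = a\<^sup>2 * y"
  shows "x = y * (a / s)\<^sup>2"
proof -
  have "x = (inverse s * s)\<^sup>2 * x" using inverse_mult_dual[OF assms(1)] by simp
  also have "\<dots> = (inverse s)\<^sup>2 * (s\<^sup>2 * x)" by (simp add: power_mult_distrib)
  also have "\<dots> = y * (a * inverse s)\<^sup>2"
    unfolding assms(2) by (simp add: power_mult_distrib)
  finally show ?thesis by (simp add: divide_dual_def)
qed

lemma dual_has_deriv_const: "dual_has_deriv (\<lambda>x. c) 0 t"
  by (simp add: dual_has_deriv_def)

lemma dual_has_deriv_add:
  "dual_has_deriv f d t \<Longrightarrow> dual_has_deriv g e t \<Longrightarrow> dual_has_deriv (\<lambda>x. f x + g x) (d + e) t"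
  by (auto simp: dual_has_deriv_def intro!: derivative_eq_intros)

lemma dual_has_deriv_uminus:
  "dual_has_deriv f d t \<Longrightarrow> dual_has_deriv (\<lambda>x. - f x) (- d) t"
  by (auto simp: dual_has_deriv_def intro!: derivative_eq_intros)

lemma dual_has_deriv_mult:
  assumes "dual_has_deriv f d t" "dual_has_deriv g e t"
  shows "dual_has_deriv (\<lambda>x. f x * g x) (d * g t + f t * e) t"
  using assms unfolding dual_has_deriv_def
  by (auto intro!: derivative_eq_intros simp: algebra_simps)

lemma dual_has_deriv_unique_on_open:
  assumes "dual_has_deriv f d t" "dual_has_deriv g e t" "open I" "t \<in> I"
    and "\<And>x. x \<in> I \<Longrightarrow> f x = g x"
  shows "d = e"
proof -
  have "((\<lambda>x. Re_d (g x)) has_real_derivative Re_d d) (at t)"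
    using has_field_derivative_transform_within_open[of "\<lambda>x. Re_d (f x)" "Re_d d" t I]
      assms by (auto simp: dual_has_deriv_def)
  moreover have "((\<lambda>x. Eps_d (g x)) has_real_derivative Eps_d d) (at t)"
    using has_field_derivative_transform_within_open[of "\<lambda>x. Eps_d (f x)" "Eps_d d" t I]
      assms by (auto simp: dual_has_deriv_def)
  ultimately have "Re_d d = Re_d e" "Eps_d d = Eps_d e"
    using assms(2) DERIV_unique by (auto simp: dual_has_deriv_def)
  then show ?thesis by (simp add: dual.expand)
qed

lemma dvec_has_deriv_unique_on_open:
  assumes "dvec_has_deriv F D t" "dvec_has_deriv G E t" "open I" "t \<in> I"
    and "\<And>x. x \<in> I \<Longrightarrow> F x = G x"
  shows "D = E"
  using assms dual_has_deriv_unique_on_open[of _ _ t _ _ I]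
  by (auto simp: dvec_has_deriv_def dvec.expand)

lemma dvec_has_deriv_smult:
  assumes "dual_has_deriv \<mu> m t" "dvec_has_deriv W E t"
  shows "dvec_has_deriv (\<lambda>x. smult (\<mu> x) (W x)) (vadd (smult m (W t)) (smult (\<mu> t) E)) t"
  using assms by (auto simp: dvec_has_deriv_def smult_def vadd_def intro!: dual_has_deriv_mult)

lemma linner_smult_left: "linner (smult a u) v = a * linner u v"
  by (simp add: linner_def smult_def algebra_simps)

lemma linner_smult_right: "linner u (smult a v) = a * linner u v"
  by (simp add: linner_def smult_def algebra_simps)

lemma linner_vadd_left: "linner (vadd u w) v = linner u v + linner w v"
  by (simp add: linner_def vadd_def algebra_simps)

lemma linner_vadd_right: "linner u (vadd v w) = linner u v + linner u w"
  by (simp add: linner_def vadd_def algebra_simps)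

lemma linner_commute: "linner u v = linner v u"
  by (simp add: linner_def algebra_simps)

lemma linner_has_deriv:
  assumes "dvec_has_deriv U D t" "dvec_has_deriv W E t"
  shows "dual_has_deriv (\<lambda>x. linner (U x) (W x)) (linner D (W t) + linner (U t) E) t"
proof -
  have "dual_has_deriv (\<lambda>x. - (c1 (U x) * c1 (W x)) + c2 (U x) * c2 (W x) + c3 (U x) * c3 (W x))
    (- (c1 D * c1 (W t) + c1 (U t) * c1 E) + (c2 D * c2 (W t) + c2 (U t) * c2 E)
      + (c3 D * c3 (W t) + c3 (U t) * c3 E)) t"
    using assms unfolding dvec_has_deriv_def
    by (intro dual_has_deriv_add dual_has_deriv_uminus dual_has_deriv_mult) auto
  then show ?thesis by (simp add: linner_def algebra_simps)
qed

lemma dline_eq_imp_parallel: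
  assumes "dline p d = dline q e"
  obtains c where "e = smult c d"
proof -
  have "vadd q (smult 0 e) \<in> dline q e" "vadd q (smult 1 e) \<in> dline q e"
    unfolding dline_def by blast+
  moreover have "vadd q (smult 0 e) = q" by (cases q) (simp add: vadd_def smult_def)
  ultimately have "q \<in> dline q e" "vadd q (smult 1 e) \<in> dline q e" by simp_all
  then obtain a b where "q = vadd p (smult a d)" "vadd q (smult 1 e) = vadd p (smult b d)"
    using assms unfolding dline_def by blast
  then have "e = smult (b - a) d"
    by (simp add: vadd_def smult_def dvec.expand algebra_simps)
  then show ?thesis by (rule that)
qed

lemma parallel_unit_vectors:
  assumes "e = smult c d" "linner d d = 1" "linner e e = 1"
  shows "c = linner e d" "c * c = 1"
  using assms by (simp_all add: linner_smult_left linner_smult_right mult.assoc)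

lemma mannheim_normal_eq_binormal:
  assumes "mannheim_pair I \<alpha> B \<beta> V2" "x \<in> I"
    and "linner (B x) (B x) = 1" "linner (V2 x) (V2 x) = 1"
  shows "V2 x = smult (linner (V2 x) (B x)) (B x)"
    and "linner (V2 x) (B x) * linner (V2 x) (B x) = 1"
proof -
  have "dline (\<alpha> x) (B x) = dline (\<beta> x) (V2 x)"
    using assms(1,2) by (simp add: mannheim_pair_def)
  then obtain c where c: "V2 x = smult c (B x)" by (rule dline_eq_imp_parallel)
  show "V2 x = smult (linner (V2 x) (B x)) (B x)"
    "linner (V2 x) (B x) * linner (V2 x) (B x) = 1"
    using parallel_unit_vectors[OF c assms(3,4)] c by simp_all
qed

text \<open>Differentiating \<open>\<mu>\<^sup>2 = 1\<close> gives \<open>2 \<mu> \<mu>' = 0\<close>, and \<open>\<mu>\<close> is not a zero divisor.\<close>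
lemma dual_square_one_has_deriv_zero:
  assumes "open I" "t \<in> I" "\<And>x. x \<in> I \<Longrightarrow> \<mu> x * \<mu> x = 1" "dual_has_deriv \<mu> m t"
  shows "m = 0"
proof -
  have "m * \<mu> t + \<mu> t * m = 0"
    using dual_has_deriv_unique_on_open[OF dual_has_deriv_mult[OF assms(4,4)]
        dual_has_deriv_const assms(1,2)] assms(3) by simp
  then have "(\<mu> t + \<mu> t) * m = 0" by (simp add: algebra_simps)
  moreover have "Re_d (\<mu> t + \<mu> t) \<noteq> 0"
    using dual_square_eq_1_imp_Re_nonzero[OF assms(3)[OF assms(2)]] unfolding dual_parts(1) by simp
  ultimately show ?thesis using dual_mult_eq_0_imp by blast
qed

lemma parallel_unit_fields_deriv:
  assumes "open I" "t \<in> I"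
    and "\<And>x. x \<in> I \<Longrightarrow> V x = smult (\<mu> x) (W x)" "\<And>x. x \<in> I \<Longrightarrow> \<mu> x * \<mu> x = 1"
    and "dual_has_deriv \<mu> m t" "dvec_has_deriv V D t" "dvec_has_deriv W E t"
  shows "D = smult (\<mu> t) E"
proof -
  have "D = vadd (smult m (W t)) (smult (\<mu> t) E)"
    using dvec_has_deriv_unique_on_open[OF assms(6) dvec_has_deriv_smult[OF assms(5,7)] assms(1,2)]
      assms(3) .
  moreover have "m = 0" by (rule dual_square_one_has_deriv_zero[OF assms(1,2,4,5)])
  ultimately show ?thesis by (cases E) (simp add: vadd_def smult_def)
qed

lemma linner_self_spacelike_frame_combination:
  assumes "linner v1 v1 = 1" "linner v3 v3 = -1" "linner v1 v3 = 0"
  shows "linner (smult s (vadd (smult a v1) (smult b v3))) (smult s (vadd (smult a v1) (smult b v3)))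
    = s\<^sup>2 * (a\<^sup>2 - b\<^sup>2)"
  using assms linner_commute[of v3 v1]
  by (simp add: linner_smult_left linner_smult_right linner_vadd_left linner_vadd_right
      power2_eq_square algebra_simps)

theorem corollary3p4:
  fixes I :: "real set"
    and \<alpha> \<beta> T N B V1 V2 V3 :: "real \<Rightarrow> dvec"
    and \<sigma> \<sigma>s \<kappa> \<tau> P Q :: "real \<Rightarrow> dual"
  assumes "open I"
    and "timelike_frenet I \<alpha> \<sigma> T N B \<kappa> \<tau>"
    and "spacelike_frenet I \<beta> \<sigma>s V1 V2 V3 P Q"
    and "mannheim_pair I \<alpha> B \<beta> V2"
    and "t \<in> I"
  shows "(P t)\<^sup>2 - (Q t)\<^sup>2 = (\<tau> t)\<^sup>2 * (\<sigma> t / \<sigma>s t)\<^sup>2"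
proof -
  define \<mu> where "\<mu> x = linner (V2 x) (B x)" for x
  note tf = assms(2)[unfolded timelike_frenet_def, rule_format]
  note sf = assms(3)[unfolded spacelike_frenet_def, rule_format]
  have V2_eq: "V2 x = smult (\<mu> x) (B x)" and \<mu>_sq: "\<mu> x * \<mu> x = 1" if "x \<in> I" for x
    using mannheim_normal_eq_binormal[OF assms(4) that] tf[OF that] sf[OF that]
    unfolding \<mu>_def by auto
  obtain m where m: "dual_has_deriv \<mu> m t"
    unfolding \<mu>_def using sf[OF assms(5)] tf[OF assms(5)] by (blast intro: linner_has_deriv)
  have "smult (\<sigma>s t) (vadd (smult (- P t) (V1 t)) (smult (Q t) (V3 t)))
      = smult (\<mu> t) (smult (\<sigma> t * - \<tau> t) (N t))" (is "?L = ?R")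
    using parallel_unit_fields_deriv[where V = V2 and W = B and \<mu> = \<mu>, OF assms(1,5) V2_eq \<mu>_sq m]
      sf[OF assms(5)] tf[OF assms(5)] by blast
  moreover have "linner ?L ?L = (\<sigma>s t)\<^sup>2 * ((P t)\<^sup>2 - (Q t)\<^sup>2)"
    using linner_self_spacelike_frame_combination[of "V1 t" "V3 t"] sf[OF assms(5)] by simp
  moreover have "linner ?R ?R = (\<mu> t * \<mu> t) * (\<sigma> t * \<tau> t)\<^sup>2 * linner (N t) (N t)"
    by (simp add: linner_smult_left linner_smult_right power2_eq_square algebra_simps)
  then have "linner ?R ?R = (\<sigma> t)\<^sup>2 * (\<tau> t)\<^sup>2"
    using tf[OF assms(5)] \<mu>_sq[OF assms(5)] by (simp add: power_mult_distrib)
  ultimately have "(\<sigma>s t)\<^sup>2 * ((P t)\<^sup>2 - (Q t)\<^sup>2) = (\<sigma> t)\<^sup>2 * (\<tau> t)\<^sup>2" by simp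
  then show ?thesis
    using dual_eq_times_square_div[of "\<sigma>s t"] sf[OF assms(5)] by (simp add: mult.commute)
qed

end
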